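(* Let $G$ be a connected graph with at least $3$ vertices and $\lambda_3(G)=k$, and let $x,y$ be two adjacent vertices of $G$. Then $d_G(x)\ge k+1$ or $d_G(y)\ge k+1$.
   Context: For a graph $G$ and $S\subseteq V(G)$ with $|S|\ge 2$, an $S$-tree is a subgraph of $G$ that is a tree containing all vertices of $S$; $\lambda(S)$ is the maximum number of pairwise edge-disjoint $S$-trees, and $\lambda_3(G)=\min\{\lambda(S): |S|=3\}$. $d_G(v)$ is the degree of $v$ in $G$. *)

theory Defs
  imports Main
begin

definition graph :: "'a set \<Rightarrow> 'a set set \<Rightarrow> bool" where
  "graph V E \<longleftrightarrow> finite V \<and> (\<forall>e\<in>E. e \<subseteq> V \<and> card e = 2)"

definition adj :: "'a set set \<Rightarrow> 'a \<Rightarrow> 'a \<Rightarrow> bool" where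
  "adj E u v \<longleftrightarrow> {u, v} \<in> E"

definition connected_graph :: "'a set \<Rightarrow> 'a set set \<Rightarrow> bool" where
  "connected_graph V E \<longleftrightarrow>
     (\<forall>u\<in>V. \<forall>v\<in>V. (u, v) \<in> {(a, b). a \<in> V \<and> b \<in> V \<and> adj E a b}\<^sup>*)"

definition is_cycle :: "'a set set \<Rightarrow> 'a list \<Rightarrow> bool" where
  "is_cycle E cs \<longleftrightarrow> length cs \<ge> 3 \<and> distinct cs \<and>
     (\<forall>i. Suc i < length cs \<longrightarrow> adj E (cs ! i) (cs ! Suc i)) \<and>
     adj E (last cs) (hd cs)"

definition acyclic_graph :: "'a set set \<Rightarrow> bool" where
  "acyclic_graph E \<longleftrightarrow> \<not> (\<exists>cs. is_cycle E cs)"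

definition is_tree :: "'a set \<Rightarrow> 'a set set \<Rightarrow> bool" where
  "is_tree V E \<longleftrightarrow> graph V E \<and> connected_graph V E \<and> acyclic_graph E"

definition S_tree :: "'a set \<Rightarrow> 'a set set \<Rightarrow> 'a set \<Rightarrow> 'a set \<times> 'a set set \<Rightarrow> bool" where
  "S_tree V E S T \<longleftrightarrow> fst T \<subseteq> V \<and> snd T \<subseteq> E \<and> is_tree (fst T) (snd T) \<and> S \<subseteq> fst T"

definition lambda_S :: "'a set \<Rightarrow> 'a set set \<Rightarrow> 'a set \<Rightarrow> nat" where
  "lambda_S V E S = (GREATEST k. \<exists>T :: nat \<Rightarrow> 'a set \<times> 'a set set.
      (\<forall>i<k. S_tree V E S (T i)) \<and>
      (\<forall>i<k. \<forall>j<k. i \<noteq> j \<longrightarrow> snd (T i) \<inter> snd (T j) = {}))"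

definition lambda3 :: "'a set \<Rightarrow> 'a set set \<Rightarrow> nat" where
  "lambda3 V E = Min {lambda_S V E S | S. S \<subseteq> V \<and> card S = 3}"

definition degree :: "'a set set \<Rightarrow> 'a \<Rightarrow> nat" where
  "degree E v = card {e \<in> E. v \<in> e}"

end

theory Submission
  imports Defs
begin

text \<open>Take S = {x, y, z} for a third vertex z. Every S-tree has an edge leaving {x, y}
  (towards z) and, since it also connects x with y, an edge at the other vertex of the pair;
  so k edge-disjoint S-trees use at least 2k edges incident to x or y. There are at most
  d(x) + d(y) - 1 such edges, as xy is counted twice, so d(x), d(y) \<le> k would give
  2k \<le> 2k - 1.\<close>

lemma graph_finite_edges:
  assumes "graph V E"
  shows "finite E"
proof -
  have "E \<subseteq> Pow V"
    using assms by (auto simp: graph_def)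
  then show ?thesis
    using assms finite_subset by (auto simp: graph_def)
qed

lemma graph_edge_ends_distinct:
  assumes "graph V E" "{x, y} \<in> E"
  shows "x \<noteq> y"
  using assms by (auto simp: graph_def)

lemma card_ge_3_obtain_third:
  assumes "card V \<ge> 3"
  obtains z where "z \<in> V" "z \<noteq> x" "z \<noteq> y"
proof -
  have "card {x, y} < card V"
    using assms by (cases "x = y") simp_all
  then have "\<not> V \<subseteq> {x, y}"
    using card_mono[of "{x, y}" V] by auto
  then show ?thesis
    using that by auto
qed

lemma rtrancl_exits_set:
  assumes "(a, b) \<in> R\<^sup>*" "a \<in> A" "b \<notin> A"
  shows "\<exists>u w. u \<in> A \<and> w \<notin> A \<and> (u, w) \<in> R"
  using assms
proof (induction rule: rtrancl_induct)
  case (step c b)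
  then show ?case by (cases "c \<in> A") auto
qed simp

lemma connected_graph_edge_across:
  assumes "connected_graph T F" "u \<in> T" "v \<in> T" "u \<in> A" "v \<notin> A"
  shows "\<exists>a b. a \<in> A \<and> b \<notin> A \<and> {a, b} \<in> F"
proof -
  have "(u, v) \<in> {(a, b). a \<in> T \<and> b \<in> T \<and> adj F a b}\<^sup>*"
    using assms(1-3) unfolding connected_graph_def by blast
  then show ?thesis
    using rtrancl_exits_set[of u v _ A] assms(4,5) by (fastforce simp: adj_def)
qed

lemma connected_graph_two_edges_at_pair:
  assumes conn: "connected_graph T F" and "finite F"
    and T: "x \<in> T" "y \<in> T" "z \<in> T" and "x \<noteq> y" "z \<noteq> x" "z \<noteq> y"
  shows "2 \<le> card (F \<inter> {e. x \<in> e \<or> y \<in> e})"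
proof -
  obtain a b where ab: "a \<in> {x, y}" "b \<notin> {x, y}" "{a, b} \<in> F"
    using connected_graph_edge_across[OF conn, of x z "{x, y}"] T assms(6-8) by auto
  \<comment> \<open>c is the vertex of the pair not on the first edge; walking from c to a gives a second edge\<close>
  define c where "c = (if a = x then y else x)"
  have c: "c \<in> {x, y}" "c \<notin> {a, b}"
    using ab \<open>x \<noteq> y\<close> by (auto simp: c_def)
  obtain d where "{c, d} \<in> F" "d \<noteq> c"
    using connected_graph_edge_across[OF conn, of c a "{c}"] T ab(1) c by auto
  then have "{{a, b}, {c, d}} \<subseteq> F \<inter> {e. x \<in> e \<or> y \<in> e}" "{a, b} \<noteq> {c, d}"
    using ab c by auto
  then show ?thesis
    using \<open>finite F\<close> card_mono[of "F \<inter> {e. x \<in> e \<or> y \<in> e}" "{{a, b}, {c, d}}"] by auto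
qed

lemma card_edges_at_edge_le_degrees:
  assumes "finite E" "{x, y} \<in> E"
  shows "card (E \<inter> {e. x \<in> e \<or> y \<in> e}) + 1 \<le> degree E x + degree E y"
proof -
  let ?X = "{e \<in> E. x \<in> e}" and ?Y = "{e \<in> E. y \<in> e}"
  have split: "E \<inter> {e. x \<in> e \<or> y \<in> e} = ?X \<union> ?Y"
    by blast
  have "?X \<inter> ?Y \<noteq> {}" "finite (?X \<inter> ?Y)"
    using assms by auto
  then have "1 \<le> card (?X \<inter> ?Y)"
    by (simp add: Suc_leI card_gt_0_iff)
  moreover have "card ?X + card ?Y = card (?X \<union> ?Y) + card (?X \<inter> ?Y)"
    using assms(1) by (intro card_Un_Int) simp_all
  ultimately show ?thesis
    unfolding degree_def split by linarith
qed

lemma disjoint_family_card_ge: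
  assumes "finite D"
    and "\<And>i. i < t \<Longrightarrow> F i \<subseteq> D"
    and "\<And>i j. i < t \<Longrightarrow> j < t \<Longrightarrow> i \<noteq> j \<Longrightarrow> F i \<inter> F j = {}"
    and "\<And>i. i < t \<Longrightarrow> m \<le> card (F i)"
  shows "m * t \<le> card D"
proof -
  have "m * t = (\<Sum>i<t. m)"
    by simp
  also have "\<dots> \<le> (\<Sum>i<t. card (F i))"
    using assms(4) by (intro sum_mono) simp
  also have "\<dots> = card (\<Union>i<t. F i)"
    using assms(1-3) by (intro card_UN_disjoint[symmetric]) (auto intro: finite_subset)
  also have "\<dots> \<le> card D"
    using assms(1,2) by (intro card_mono) auto
  finally show ?thesis .
qed

definition disjoint_S_trees ::
    "'a set \<Rightarrow> 'a set set \<Rightarrow> 'a set \<Rightarrow> nat \<Rightarrow> (nat \<Rightarrow> 'a set \<times> 'a set set) \<Rightarrow> bool" where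
  "disjoint_S_trees V E S t T \<longleftrightarrow>
     (\<forall>i<t. S_tree V E S (T i)) \<and>
     (\<forall>i<t. \<forall>j<t. i \<noteq> j \<longrightarrow> snd (T i) \<inter> snd (T j) = {})"

lemma lambda_S_attained:
  assumes "\<And>t T. disjoint_S_trees V E S t T \<Longrightarrow> t \<le> b"
  shows "\<exists>T. disjoint_S_trees V E S (lambda_S V E S) T"
proof -
  \<comment> \<open>without the bound b, GREATEST would be an arbitrary junk value\<close>
  have "lambda_S V E S = (GREATEST t. \<exists>T. disjoint_S_trees V E S t T)"
    by (simp add: lambda_S_def disjoint_S_trees_def)
  moreover have "\<exists>T. disjoint_S_trees V E S 0 T"
    by (simp add: disjoint_S_trees_def)
  ultimately show ?thesis
    using assms GreatestI_nat[of "\<lambda>t. \<exists>T. disjoint_S_trees V E S t T" 0 b] by auto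
qed

lemma disjoint_S_trees_edges_at_pair:
  assumes "finite E" "disjoint_S_trees V E {x, y, z} t T"
    and "x \<noteq> y" "z \<noteq> x" "z \<noteq> y"
  shows "2 * t \<le> card (E \<inter> {e. x \<in> e \<or> y \<in> e})"
proof (rule disjoint_family_card_ge[where F = "\<lambda>i. snd (T i) \<inter> {e. x \<in> e \<or> y \<in> e}"])
  fix i assume "i < t"
  then have tree: "S_tree V E {x, y, z} (T i)"
    using assms(2) by (simp add: disjoint_S_trees_def)
  then show "snd (T i) \<inter> {e. x \<in> e \<or> y \<in> e} \<subseteq> E \<inter> {e. x \<in> e \<or> y \<in> e}"
    by (auto simp: S_tree_def)
  have "finite (snd (T i))"
    using tree assms(1) finite_subset by (auto simp: S_tree_def)
  then show "2 \<le> card (snd (T i) \<inter> {e. x \<in> e \<or> y \<in> e})"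
    using tree assms(3-5)
    by (intro connected_graph_two_edges_at_pair[where T = "fst (T i)" and z = z])
      (auto simp: S_tree_def is_tree_def)
qed (use assms in \<open>auto simp: disjoint_S_trees_def\<close>)

lemma lambda_S_triple_edges_at_pair:
  assumes "finite E" "x \<noteq> y" "z \<noteq> x" "z \<noteq> y"
  shows "2 * lambda_S V E {x, y, z} \<le> card (E \<inter> {e. x \<in> e \<or> y \<in> e})"
proof -
  have bound: "2 * t \<le> card (E \<inter> {e. x \<in> e \<or> y \<in> e})"
    if "disjoint_S_trees V E {x, y, z} t T" for t T
    using disjoint_S_trees_edges_at_pair[OF assms(1) that assms(2-4)] .
  obtain T where "disjoint_S_trees V E {x, y, z} (lambda_S V E {x, y, z}) T"
    using lambda_S_attained[of V E "{x, y, z}" "card (E \<inter> {e. x \<in> e \<or> y \<in> e})"] bound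
    by fastforce
  then show ?thesis
    using bound by blast
qed

lemma lambda3_le_lambda_S:
  assumes "finite V" "S \<subseteq> V" "card S = 3"
  shows "lambda3 V E \<le> lambda_S V E S"
proof -
  have "{lambda_S V E S | S. S \<subseteq> V \<and> card S = 3} \<subseteq> lambda_S V E ` Pow V"
    by auto
  then have "finite {lambda_S V E S | S. S \<subseteq> V \<and> card S = 3}"
    using assms(1) finite_subset by blast
  then show ?thesis
    unfolding lambda3_def using assms(2,3) by (intro Min_le) auto
qed

theorem mainTheorem5:
  fixes V :: "'a set" and E :: "'a set set" and k :: nat and x y :: 'a
  assumes "graph V E"
    and "connected_graph V E"
    and "card V \<ge> 3"
    and "lambda3 V E = k"
    and "x \<in> V" and "y \<in> V" and "{x, y} \<in> E"
  shows "degree E x \<ge> k + 1 \<or> degree E y \<ge> k + 1"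
proof -
  have "finite V"
    using assms(1) by (simp add: graph_def)
  have "finite E"
    using assms(1) by (rule graph_finite_edges)
  have "x \<noteq> y"
    using assms(1,7) by (rule graph_edge_ends_distinct)
  obtain z where z: "z \<in> V" "z \<noteq> x" "z \<noteq> y"
    using card_ge_3_obtain_third[OF assms(3)] .
  have "card {x, y, z} = 3" "{x, y, z} \<subseteq> V"
    using \<open>x \<noteq> y\<close> z assms(5,6) by auto
  then have "k \<le> lambda_S V E {x, y, z}"
    using lambda3_le_lambda_S \<open>finite V\<close> assms(4) by blast
  moreover have "2 * lambda_S V E {x, y, z} \<le> card (E \<inter> {e. x \<in> e \<or> y \<in> e})"
    using lambda_S_triple_edges_at_pair \<open>finite E\<close> \<open>x \<noteq> y\<close> z(2,3) .
  moreover have "card (E \<inter> {e. x \<in> e \<or> y \<in> e}) + 1 \<le> degree E x + degree E y"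
    using card_edges_at_edge_le_degrees \<open>finite E\<close> assms(7) .
  ultimately show ?thesis
    by linarith
qed

end
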